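(* Let $n\ge1$, $P>0$, $b>0$ and fixed parameters $\widetilde\alpha_r>0$, $r=1,\dots,n$. For $\boldsymbol{\alpha}\in\mathcal{A}:=\{\boldsymbol{\alpha}: 0<\alpha_r\le b,\ r=1,\dots,n\}$ let $$(x_1^*(\boldsymbol{\alpha}),\dots,x_n^*(\boldsymbol{\alpha}))=\arg\max_{x_r>0,\ \sum_{r=1}^n x_r\le P}\ \sum_{r=1}^n\frac{x_r^{1-\alpha_r}}{1-\alpha_r},\qquad \Psi(\boldsymbol{\alpha})=\sum_{r=1}^n\frac{x_r^*(\boldsymbol{\alpha})^{1-\widetilde\alpha_r}}{1-\widetilde\alpha_r}.$$ Let $\boldsymbol{\alpha}^*\in\arg\max_{\boldsymbol{\alpha}\in\mathcal{A}}\Psi(\boldsymbol{\alpha})$ be any solution. Then $(x_1^*(\boldsymbol{\alpha}^* ),\dots,x_n^*(\boldsymbol{\alpha}^* ))$ is a solution of $$\max_{x_1,\dots,x_n}\ \sum_{r=1}^n\frac{x_r^{1-\widetilde\alpha_r}}{1-\widetilde\alpha_r}\quad\text{subject to}\quad \sum_{r=1}^nx_r\le P,\ x_r>0,\ r=1,\dots,n.$$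
   Context: This is a single-link network shared by $n$ users with link capacity $P$; the upper-level true utilities are $\alpha$-fairness functions with parameters $\widetilde\alpha_r$, and the lower level allocates rates using $\alpha$-fairness surrogate utilities with tunable parameters $\alpha_r$. *)

theory Defs
  imports Complex_Main
begin

text \<open>alpha-fairness utility; the case alpha = 1 is the standard logarithmic limit.\<close>
definition alpha_util :: "real \<Rightarrow> real \<Rightarrow> real" where
  "alpha_util a x = (if a = 1 then ln x else x powr (1 - a) / (1 - a))"

definition feasible_alloc :: "nat \<Rightarrow> real \<Rightarrow> (nat \<Rightarrow> real) \<Rightarrow> bool" where
  "feasible_alloc n P x \<longleftrightarrow> (\<forall>r\<in>{1..n}. 0 < x r) \<and> (\<Sum>r=1..n. x r) \<le> P"

definition total_util :: "nat \<Rightarrow> (nat \<Rightarrow> real) \<Rightarrow> (nat \<Rightarrow> real) \<Rightarrow> real" where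
  "total_util n a x = (\<Sum>r=1..n. alpha_util (a r) (x r))"

definition is_opt_alloc :: "nat \<Rightarrow> real \<Rightarrow> (nat \<Rightarrow> real) \<Rightarrow> (nat \<Rightarrow> real) \<Rightarrow> bool" where
  "is_opt_alloc n P a x \<longleftrightarrow> feasible_alloc n P x \<and>
     (\<forall>y. feasible_alloc n P y \<longrightarrow> total_util n a y \<le> total_util n a x)"

definition param_set :: "nat \<Rightarrow> real \<Rightarrow> (nat \<Rightarrow> real) set" where
  "param_set n b = {a. \<forall>r\<in>{1..n}. 0 < a r \<and> a r \<le> b}"

end

theory Submission
  imports Defs
begin

text \<open>Every alpha-fair utility is strictly concave with marginal utility x powr (-a). Hence an
  allocation that fills the link and equalises the marginal utilities of all users is the unique
  optimum (the KKT conditions). For the true parameters such an allocation has the form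
  x_r = exp (-mu / atil_r). Scaling all parameters by a common factor t > 0 keeps the marginals
  equal, since x_r powr (- t * atil_r) = exp (t * mu); choosing t so that t * atil lies in the
  parameter set, the lower level therefore reproduces the true optimum exactly, and a maximiser
  of the upper-level objective can do no worse.\<close>

lemma has_real_derivative_alpha_util:
  assumes "z > 0"
  shows "(alpha_util a has_real_derivative z powr (-a)) (at z)"
proof (cases "a = 1")
  case True
  then have "alpha_util a = ln" by (auto simp: alpha_util_def fun_eq_iff)
  with True assms show ?thesis
    by (auto intro!: derivative_eq_intros simp: powr_minus_divide)
next
  case False
  then have "alpha_util a = (\<lambda>z. z powr (1 - a) / (1 - a))"
    by (auto simp: alpha_util_def fun_eq_iff)
  with False assms show ?thesis by (auto intro!: derivative_eq_intros)
qed

lemma alpha_util_less_tangent: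
  assumes a: "a > 0" and x: "x > 0" and y: "y > 0" and "y \<noteq> x"
  shows "alpha_util a y < alpha_util a x + x powr (-a) * (y - x)"
proof -
  define g where "g z = alpha_util a x + x powr (-a) * (z - x) - alpha_util a z" for z
  have dg: "(g has_real_derivative x powr (-a) - z powr (-a)) (at z)" if "z > 0" for z
    unfolding g_def using has_real_derivative_alpha_util[OF that, of a]
    by (auto intro!: derivative_eq_intros)
  have "g y > 0"
  proof (cases "y < x")
    case True
    obtain z where z: "y < z" "z < x" "g x - g y = (x - y) * (x powr (-a) - z powr (-a))"
      using MVT2[OF True, of g "\<lambda>z. x powr (-a) - z powr (-a)"] dg y by force
    have "x powr (-a) < z powr (-a)" using z y a by (intro powr_less_mono2_neg) auto
    with True have "(x - y) * (x powr (-a) - z powr (-a)) < 0" by (intro mult_pos_neg) auto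
    with z show ?thesis by (simp add: g_def)
  next
    case False
    with \<open>y \<noteq> x\<close> have "x < y" by simp
    obtain z where z: "x < z" "z < y" "g y - g x = (y - x) * (x powr (-a) - z powr (-a))"
      using MVT2[OF \<open>x < y\<close>, of g "\<lambda>z. x powr (-a) - z powr (-a)"] dg x by force
    have "z powr (-a) < x powr (-a)" using z x a by (intro powr_less_mono2_neg) auto
    with \<open>x < y\<close> z show ?thesis by (simp add: g_def)
  qed
  then show ?thesis by (simp add: g_def)
qed

lemma alpha_util_le_tangent:
  assumes "a > 0" and "x > 0" and "y > 0"
  shows "alpha_util a y \<le> alpha_util a x + x powr (-a) * (y - x)"
  using alpha_util_less_tangent[OF assms] by (cases "y = x") auto

lemma total_util_cong:
  assumes "\<forall>r\<in>{1..n}. x r = y r"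
  shows "total_util n a x = total_util n a y"
  unfolding total_util_def using assms by (intro sum.cong) auto

lemma equal_marginals_total_util_less:
  assumes a: "\<forall>r\<in>{1..n}. a r > 0" and x: "\<forall>r\<in>{1..n}. x r > 0"
    and full: "(\<Sum>r=1..n. x r) = P"
    and marginal: "\<forall>r\<in>{1..n}. x r powr (- a r) = c"
    and y: "feasible_alloc n P y" and r0: "r0 \<in> {1..n}" "y r0 \<noteq> x r0"
  shows "total_util n a y < total_util n a x"
proof -
  have ypos: "\<forall>r\<in>{1..n}. y r > 0" and ysum: "(\<Sum>r=1..n. y r) \<le> P"
    using y by (auto simp: feasible_alloc_def)
  have "c > 0" using marginal x r0 by force
  have tangent: "alpha_util (a r) (y r) \<le> alpha_util (a r) (x r) + c * (y r - x r)"
    if "r \<in> {1..n}" for r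
    using alpha_util_le_tangent a x ypos marginal that by metis
  have "alpha_util (a r0) (y r0) < alpha_util (a r0) (x r0) + c * (y r0 - x r0)"
    using alpha_util_less_tangent a x ypos marginal r0 by metis
  then have "total_util n a y < (\<Sum>r=1..n. alpha_util (a r) (x r) + c * (y r - x r))"
    unfolding total_util_def using r0 tangent by (intro sum_strict_mono_ex1) auto
  also have "\<dots> = total_util n a x + c * ((\<Sum>r=1..n. y r) - (\<Sum>r=1..n. x r))"
    by (simp add: total_util_def sum.distrib sum_distrib_left sum_subtractf algebra_simps)
  also have "\<dots> \<le> total_util n a x"
    using ysum full \<open>c > 0\<close> by (simp add: mult_le_0_iff)
  finally show ?thesis .
qed

lemma equal_marginals_total_util_le:
  assumes "\<forall>r\<in>{1..n}. a r > 0" and "\<forall>r\<in>{1..n}. x r > 0"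
    and "(\<Sum>r=1..n. x r) = P"
    and "\<forall>r\<in>{1..n}. x r powr (- a r) = c"
    and "feasible_alloc n P y"
  shows "total_util n a y \<le> total_util n a x"
proof (cases "\<forall>r\<in>{1..n}. y r = x r")
  case True
  then show ?thesis using total_util_cong[of n y x a] by simp
next
  case False
  with equal_marginals_total_util_less[OF assms] show ?thesis by fastforce
qed

lemma equal_marginals_is_opt_alloc:
  assumes "\<forall>r\<in>{1..n}. a r > 0" and "\<forall>r\<in>{1..n}. x r > 0"
    and "(\<Sum>r=1..n. x r) = P"
    and "\<forall>r\<in>{1..n}. x r powr (- a r) = c"
  shows "is_opt_alloc n P a x"
  using assms equal_marginals_total_util_le[OF assms]
  by (simp add: is_opt_alloc_def feasible_alloc_def)

lemma equal_marginals_opt_alloc_unique: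
  assumes "\<forall>r\<in>{1..n}. a r > 0" and "\<forall>r\<in>{1..n}. x r > 0"
    and "(\<Sum>r=1..n. x r) = P"
    and "\<forall>r\<in>{1..n}. x r powr (- a r) = c"
    and "is_opt_alloc n P a y" and "r \<in> {1..n}"
  shows "y r = x r"
proof (rule ccontr)
  assume "y r \<noteq> x r"
  with assms have "total_util n a y < total_util n a x"
    by (intro equal_marginals_total_util_less) (auto simp: is_opt_alloc_def)
  moreover have "total_util n a x \<le> total_util n a y"
    using assms equal_marginals_is_opt_alloc[OF assms(1-4)] by (simp add: is_opt_alloc_def)
  ultimately show False by simp
qed

lemma is_opt_alloc_if_util_ge:
  assumes "is_opt_alloc n P a x" and "feasible_alloc n P z"
    and "total_util n a x \<le> total_util n a z"
  shows "is_opt_alloc n P a z"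
  using assms by (auto simp: is_opt_alloc_def)

text \<open>The left endpoint makes the term of user 1 alone at least P; the right one makes every
  term at most P / n.\<close>
lemma exists_sum_exp_eq:
  fixes a :: "nat \<Rightarrow> real" and P :: real
  assumes "n \<ge> 1" and "P > 0" and a: "\<forall>r\<in>{1..n}. a r > 0"
  shows "\<exists>mu. (\<Sum>r=1..n. exp (- mu / a r)) = P"
proof -
  define f where "f mu = (\<Sum>r=1..n. exp (- mu / a r))" for mu
  define m1 where "m1 = - a 1 * \<bar>ln P\<bar>"
  define m2 where "m2 = (\<Sum>r=1..n. a r) * \<bar>ln (P / n)\<bar>"
  have a_le_sum: "a r \<le> (\<Sum>r=1..n. a r)" if "r \<in> {1..n}" for r
    using that a by (intro member_le_sum) (auto simp: less_imp_le)
  have "a 1 > 0" using a \<open>n \<ge> 1\<close> by simp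
  have "m1 \<le> 0" "0 \<le> m2"
    unfolding m1_def m2_def using \<open>a 1 > 0\<close> a_le_sum[of 1] \<open>n \<ge> 1\<close> by simp_all
  then have "m1 \<le> m2" by simp
  have "- m1 / a 1 = \<bar>ln P\<bar>" using \<open>a 1 > 0\<close> by (simp add: m1_def)
  moreover have "P \<le> exp \<bar>ln P\<bar>"
    using \<open>P > 0\<close> exp_ln[of P] exp_le_cancel_iff[of "ln P" "\<bar>ln P\<bar>"] by simp
  ultimately have "P \<le> exp (- m1 / a 1)" by simp
  also have "\<dots> \<le> f m1" unfolding f_def using \<open>n \<ge> 1\<close> by (intro member_le_sum) auto
  finally have "P \<le> f m1" .
  have "exp (- m2 / a r) \<le> P / n" if r: "r \<in> {1..n}" for r
  proof -
    have "a r * \<bar>ln (P / n)\<bar> \<le> m2"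
      unfolding m2_def using a_le_sum[OF r] by (simp add: mult_right_mono)
    then have "\<bar>ln (P / n)\<bar> \<le> m2 / a r" using a r by (simp add: field_simps)
    then have "exp (- m2 / a r) \<le> exp (ln (P / n))" by simp
    also have "\<dots> = P / n" using \<open>P > 0\<close> \<open>n \<ge> 1\<close> by simp
    finally show ?thesis .
  qed
  then have "f m2 \<le> real (card {1..n}) * (P / n)"
    unfolding f_def by (intro sum_bounded_above) auto
  then have "f m2 \<le> P" using \<open>n \<ge> 1\<close> by simp
  have "isCont f mu" for mu
    unfolding f_def using a by (auto intro!: continuous_intros)
  then show ?thesis
    using IVT2[of f m2 P m1] \<open>P \<le> f m1\<close> \<open>f m2 \<le> P\<close> \<open>m1 \<le> m2\<close> unfolding f_def by blast
qed

lemma scaled_in_param_set: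
  assumes "b > 0" and "\<forall>r\<in>{1..n}. a r > 0"
  shows "(\<lambda>r. b / (\<Sum>r=1..n. a r) * a r) \<in> param_set n b"
proof -
  have "0 < b / (\<Sum>r=1..n. a r) * a r \<and> b / (\<Sum>r=1..n. a r) * a r \<le> b"
    if r: "r \<in> {1..n}" for r
  proof -
    have "0 < a r" "a r \<le> (\<Sum>r=1..n. a r)"
      using r assms by (auto intro!: member_le_sum simp: less_imp_le)
    with \<open>b > 0\<close> show ?thesis by (simp add: field_simps)
  qed
  then show ?thesis by (simp add: param_set_def)
qed

theorem theorem2:
  fixes n :: nat and P b :: real
    and atil :: "nat \<Rightarrow> real"
    and xstar :: "(nat \<Rightarrow> real) \<Rightarrow> (nat \<Rightarrow> real)"
    and astar :: "nat \<Rightarrow> real"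
  assumes "n \<ge> 1" and "P > 0" and "b > 0"
    and "\<forall>r\<in>{1..n}. atil r > 0"
    and "\<forall>a\<in>param_set n b. is_opt_alloc n P a (xstar a)"
    and "astar \<in> param_set n b"
    and "\<forall>a\<in>param_set n b. total_util n atil (xstar a) \<le> total_util n atil (xstar astar)"
  shows "is_opt_alloc n P atil (xstar astar)"
proof -
  obtain mu where mu: "(\<Sum>r=1..n. exp (- mu / atil r)) = P"
    using exists_sum_exp_eq assms(1,2,4) by blast
  define x where "x r = exp (- mu / atil r)" for r
  define t where "t = b / (\<Sum>r=1..n. atil r)"
  define a where "a r = t * atil r" for r
  have a_param: "a \<in> param_set n b"
    unfolding a_def t_def using scaled_in_param_set assms(3,4) by blast
  then have a_pos: "\<forall>r\<in>{1..n}. a r > 0" by (simp add: param_set_def)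
  have x_pos: "\<forall>r\<in>{1..n}. x r > 0" and x_full: "(\<Sum>r=1..n. x r) = P"
    using mu by (simp_all add: x_def)
  have marginals_atil: "\<forall>r\<in>{1..n}. x r powr (- atil r) = exp mu"
    and marginals_a: "\<forall>r\<in>{1..n}. x r powr (- a r) = exp (t * mu)"
    using assms(4) by (auto simp: x_def a_def powr_def)
  have "is_opt_alloc n P a (xstar a)" using assms(5) a_param by blast
  then have "\<forall>r\<in>{1..n}. xstar a r = x r"
    using equal_marginals_opt_alloc_unique[OF a_pos x_pos x_full marginals_a] by blast
  then have "total_util n atil x = total_util n atil (xstar a)" by (simp add: total_util_cong)
  also have "\<dots> \<le> total_util n atil (xstar astar)" using assms(7) a_param by blast
  finally have "total_util n atil x \<le> total_util n atil (xstar astar)" .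
  moreover have "feasible_alloc n P (xstar astar)"
    using assms(5,6) by (simp add: is_opt_alloc_def)
  ultimately show ?thesis
    using equal_marginals_is_opt_alloc[OF assms(4) x_pos x_full marginals_atil]
      is_opt_alloc_if_util_ge by blast
qed

end
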